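(* Let $A$ be an arborescence. The poset consisting of the (arc sets of) nonempty directed paths of $A$, ordered by inclusion, has order dimension at most $3$.
   Context: An arborescence is a directed tree with a root $r$ such that every node is reachable from $r$ by a directed path. The order dimension of a poset $P$ is the least number of linear orders on its ground set whose intersection is the order of $P$. *)

theory Defs
  imports Main
begin

definition adj :: "('a \<times> 'a) set \<Rightarrow> 'a \<Rightarrow> 'a \<Rightarrow> bool" where
  "adj E u v \<longleftrightarrow> (u, v) \<in> E \<or> (v, u) \<in> E"

definition undirected_cycle :: "('a \<times> 'a) set \<Rightarrow> 'a list \<Rightarrow> bool" where
  "undirected_cycle E vs \<longleftrightarrow> length vs \<ge> 3 \<and> distinct vs \<and>
     (\<forall>i. Suc i < length vs \<longrightarrow> adj E (vs ! i) (vs ! Suc i)) \<and>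
     adj E (last vs) (hd vs)"

definition directed_tree :: "'a set \<Rightarrow> ('a \<times> 'a) set \<Rightarrow> bool" where
  "directed_tree V E \<longleftrightarrow> finite V \<and> V \<noteq> {} \<and> E \<subseteq> V \<times> V \<and>
     (\<forall>v. (v, v) \<notin> E) \<and> (\<forall>u v. (u, v) \<in> E \<longrightarrow> (v, u) \<notin> E) \<and>
     (\<forall>u\<in>V. \<forall>v\<in>V. (u, v) \<in> {(x, y). adj E x y}\<^sup>*) \<and>
     (\<nexists>vs. undirected_cycle E vs)"

definition arborescence :: "'a set \<Rightarrow> ('a \<times> 'a) set \<Rightarrow> 'a \<Rightarrow> bool" where
  "arborescence V E r \<longleftrightarrow> directed_tree V E \<and> r \<in> V \<and> (\<forall>v\<in>V. (r, v) \<in> E\<^sup>*)"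

definition dipath :: "('a \<times> 'a) set \<Rightarrow> 'a list \<Rightarrow> bool" where
  "dipath E vs \<longleftrightarrow> vs \<noteq> [] \<and> distinct vs \<and>
     (\<forall>i. Suc i < length vs \<longrightarrow> (vs ! i, vs ! Suc i) \<in> E)"

definition path_arcs :: "'a list \<Rightarrow> ('a \<times> 'a) set" where
  "path_arcs vs = set (zip vs (tl vs))"

definition nonempty_path_arcsets :: "('a \<times> 'a) set \<Rightarrow> ('a \<times> 'a) set set" where
  "nonempty_path_arcsets E = {path_arcs vs | vs. dipath E vs \<and> length vs \<ge> 2}"

definition realizer :: "'b set \<Rightarrow> ('b \<times> 'b) set \<Rightarrow> nat \<Rightarrow> (nat \<Rightarrow> ('b \<times> 'b) set) \<Rightarrow> bool" where
  "realizer X R k L \<longleftrightarrow> (\<forall>i<k. linear_order_on X (L i)) \<and>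
     (\<forall>x\<in>X. \<forall>y\<in>X. (x, y) \<in> R \<longleftrightarrow> (\<forall>i<k. (x, y) \<in> L i))"

definition order_dimension :: "'b set \<Rightarrow> ('b \<times> 'b) set \<Rightarrow> nat" where
  "order_dimension X R = (LEAST k. \<exists>L. realizer X R k L)"

definition inclusion_order :: "'b set set \<Rightarrow> ('b set \<times> 'b set) set" where
  "inclusion_order X = {(p, q). p \<in> X \<and> q \<in> X \<and> p \<subseteq> q}"

end

theory Submission
  imports Defs "HOL-Library.Sublist" "HOL-Library.List_Lexorder" "HOL-Library.Product_Lexorder"
begin

text \<open>Every nonempty directed path p of an arborescence is a terminal segment of the unique
  path P(p) from the root to its last vertex, starting at some depth s(p), and p \<subseteq> q holds
  iff P(p) is a prefix of P(q) and s(q) \<le> s(p). Coding vertices by integers, a list is a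
  prefix of another iff it precedes it lexicographically both as it stands and after negating
  all entries. Refining these two lexicographic orders by decreasing depth, and adding the order
  by decreasing depth refined lexicographically, gives three linear orders whose intersection
  is inclusion.\<close>

section \<open>Directed paths in an arborescence\<close>

definition root_path :: "('a \<times> 'a) set \<Rightarrow> 'a \<Rightarrow> 'a list \<Rightarrow> bool" where
  "root_path E r P \<longleftrightarrow> dipath E P \<and> hd P = r"

lemma root_in_root_path: "root_path E r P \<Longrightarrow> r \<in> set P"
  by (cases P) (auto simp: root_path_def dipath_def)

lemma dipath_iff_successively:
  "dipath E vs \<longleftrightarrow> vs \<noteq> [] \<and> distinct vs \<and> successively (\<lambda>x y. (x, y) \<in> E) vs"
  by (simp add: dipath_def successively_conv_nth)

lemma undirected_cycle_iff_successively:
  "undirected_cycle E vs \<longleftrightarrow>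
     3 \<le> length vs \<and> distinct vs \<and> successively (adj E) vs \<and> adj E (last vs) (hd vs)"
  by (simp add: undirected_cycle_def successively_conv_nth)

lemma dipath_appendD:
  assumes "dipath E (xs @ ys)"
  shows "xs \<noteq> [] \<Longrightarrow> dipath E xs" and "ys \<noteq> [] \<Longrightarrow> dipath E ys"
  using assms by (auto simp: dipath_iff_successively successively_append_iff)

lemma dipath_set_subset:
  assumes "E \<subseteq> V \<times> V" and "dipath E vs" and "hd vs \<in> V"
  shows "set vs \<subseteq> V"
  using assms(2,3)
proof (induction vs)
  case (Cons a ws)
  have "set ws \<subseteq> V" if "ws \<noteq> []"
  proof (rule Cons.IH)
    show "dipath E ws" using Cons.prems(1) dipath_appendD(2)[of E "[a]" ws] that by simp
    have "(a, hd ws) \<in> E"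
      using Cons.prems(1) that by (auto simp: dipath_iff_successively neq_Nil_conv)
    then show "hd ws \<in> V" using assms(1) by blast
  qed
  then show ?case using Cons.prems(2) by (cases "ws = []") auto
qed simp

lemma prefix_map_iff:
  assumes "inj_on g (set xs \<union> set ys)"
  shows "prefix (map g xs) (map g ys) \<longleftrightarrow> prefix xs ys"
proof
  assume "prefix (map g xs) (map g ys)"
  then obtain xs' where xs': "prefix xs' ys" "map g xs = map g xs'"
    using prefix_map_rightE by blast
  have "inj_on g (set xs \<union> set xs')"
    using set_mono_prefix[OF xs'(1)] by (auto intro: inj_on_subset[OF assms])
  then have "xs = xs'" using xs'(2) inj_on_map_eq_map by blast
  then show "prefix xs ys" using xs'(1) by simp
qed (rule map_mono_prefix)

lemma path_arcs_drop:
  "(x, y) \<in> path_arcs (drop t Q) \<longleftrightarrow> (\<exists>j. t \<le> j \<and> Suc j < length Q \<and> x = Q ! j \<and> y = Q ! Suc j)"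
proof
  assume "(x, y) \<in> path_arcs (drop t Q)"
  then obtain i where "i < min (length (drop t Q)) (length (tl (drop t Q)))"
     "(x, y) = (drop t Q ! i, tl (drop t Q) ! i)"
    unfolding path_arcs_def set_zip by blast
  then show "\<exists>j. t \<le> j \<and> Suc j < length Q \<and> x = Q ! j \<and> y = Q ! Suc j"
    by (intro exI[of _ "t + i"]) (auto simp: nth_tl)
next
  assume "\<exists>j. t \<le> j \<and> Suc j < length Q \<and> x = Q ! j \<and> y = Q ! Suc j"
  then obtain j where j: "t \<le> j" "Suc j < length Q" "x = Q ! j" "y = Q ! Suc j" by blast
  have "(drop t Q ! (j - t), tl (drop t Q) ! (j - t)) \<in> set (zip (drop t Q) (tl (drop t Q)))"
    unfolding set_zip using j by (intro CollectI exI[of _ "j - t"]) auto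
  moreover have "drop t Q ! (j - t) = x" "tl (drop t Q) ! (j - t) = y"
    using j by (auto simp: nth_tl Suc_diff_le)
  ultimately show "(x, y) \<in> path_arcs (drop t Q)" unfolding path_arcs_def by simp
qed

lemma last_arc_in_path_arcs_drop:
  "s + 2 \<le> length P \<Longrightarrow> (P ! (length P - 2), last P) \<in> path_arcs (drop s P)"
  unfolding path_arcs_drop
  by (cases P rule: rev_cases) (auto simp: nth_append numeral_2_eq_2 intro!: exI[of _ "length P - 2"])

lemma dipath_path_arcs_subset: "dipath E vs \<Longrightarrow> path_arcs vs \<subseteq> E"
  using path_arcs_drop[of _ _ 0 vs] by (auto simp: dipath_def)

lemma undirected_cycle_of_parallel_paths:
  assumes "successively (\<lambda>x y. (x, y) \<in> E) (w # A @ [v])"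
    and "successively (\<lambda>x y. (x, y) \<in> E) (w # A' @ [v])"
    and "distinct (w # A @ v # A')" and "A \<noteq> [] \<or> A' \<noteq> []"
  shows "undirected_cycle E (w # A @ v # rev A')"
  unfolding undirected_cycle_iff_successively
proof (intro conjI)
  show "3 \<le> length (w # A @ v # rev A')" using assms(4) by (auto simp: Suc_le_eq)
  show "distinct (w # A @ v # rev A')" using assms(3) by auto
  have "successively (adj E) ((w # A) @ [v])"
    using assms(1) by (auto elim: successively_mono simp: adj_def)
  moreover have "successively (adj E) (rev (w # A' @ [v]))"
    using assms(2) unfolding successively_rev by (rule successively_mono) (simp add: adj_def)
  ultimately have "successively (adj E) ((w # A) @ (v # rev A' @ [w]))"
    unfolding successively_append_iff by simp
  then have "successively (adj E) ((w # A @ v # rev A') @ [w])"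
    by simp
  then show "successively (adj E) (w # A @ v # rev A')"
    and "adj E (last (w # A @ v # rev A')) (hd (w # A @ v # rev A'))"
    unfolding successively_append_iff by auto
qed

context
  fixes V :: "'a set" and E :: "('a \<times> 'a) set" and r :: 'a
  assumes arb: "arborescence V E r"
begin

lemma arborescence_finite: "finite V"
  and arborescence_arcs_subset: "E \<subseteq> V \<times> V"
  and arborescence_no_loop: "(v, v) \<notin> E"
  and arborescence_asym: "(u, v) \<in> E \<Longrightarrow> (v, u) \<notin> E"
  and arborescence_root_in: "r \<in> V"
  and arborescence_no_undirected_cycle: "\<not> undirected_cycle E vs"
  and arborescence_reachable: "v \<in> V \<Longrightarrow> (r, v) \<in> E\<^sup>*"
  using arb unfolding arborescence_def directed_tree_def by auto

lemma no_directed_cycle: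
  assumes W: "dipath E W" and e: "(last W, hd W) \<in> E"
  shows False
proof -
  consider a where "W = [a]" | a b where "W = [a, b]" | a b c rest where "W = a # b # c # rest"
    using W unfolding dipath_def by (metis list.exhaust)
  then show False
  proof cases
    case 1
    then show ?thesis using e arborescence_no_loop by simp
  next
    case 2
    then show ?thesis using e W arborescence_asym by (simp add: dipath_iff_successively)
  next
    case 3
    have "undirected_cycle E W"
      unfolding undirected_cycle_iff_successively
    proof (intro conjI)
      show "successively (adj E) W"
        using W unfolding dipath_iff_successively by (auto elim: successively_mono simp: adj_def)
    qed (use 3 W e in \<open>auto simp: dipath_def adj_def\<close>)
    then show ?thesis using arborescence_no_undirected_cycle by blast
  qed
qed

lemma dipath_snoc_arc:
  assumes P: "dipath E P" and e: "(last P, v) \<in> E"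
  shows "dipath E (P @ [v])"
proof -
  have "v \<notin> set P"
  proof
    assume "v \<in> set P"
    then obtain A B where AB: "P = A @ v # B" by (meson split_list)
    then have "dipath E (v # B)" using P dipath_appendD(2) by blast
    then show False using no_directed_cycle[of "v # B"] e AB by simp
  qed
  then show ?thesis using P e by (auto simp: dipath_iff_successively successively_append_iff)
qed

lemma root_path_exists:
  assumes "v \<in> V"
  shows "\<exists>P. root_path E r P \<and> last P = v"
  using arborescence_reachable[OF assms]
proof (induction rule: rtrancl_induct)
  case base
  show ?case by (intro exI[of _ "[r]"]) (simp add: root_path_def dipath_def)
next
  case (step y z)
  then obtain P where "root_path E r P" "last P = y" by blast
  then show ?case using step(2) dipath_snoc_arc
    by (intro exI[of _ "P @ [z]"]) (auto simp: root_path_def dipath_def)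
qed

lemma no_arc_into_root: "(x, r) \<notin> E"
proof
  assume e: "(x, r) \<in> E"
  then obtain P where "root_path E r P" "last P = x"
    using root_path_exists arborescence_arcs_subset by blast
  then show False using no_directed_cycle e by (auto simp: root_path_def)
qed

text \<open>If v had two in-neighbours x and x', the root paths to x and x' would branch at
  their last common vertex w, and the two branches from w to v would form a cycle.\<close>
lemma in_arc_unique:
  assumes e: "(x, v) \<in> E" "(x', v) \<in> E"
  shows "x = x'"
proof (rule ccontr)
  assume "x \<noteq> x'"
  have "x \<in> V" "x' \<in> V"
    using e arborescence_arcs_subset by auto
  then obtain P P' where P: "root_path E r P" "last P = x" and P': "root_path E r P'" "last P' = x'"
    using root_path_exists by meson
  have Pv: "dipath E (P @ [v])" and P'v: "dipath E (P' @ [v])"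
    using dipath_snoc_arc P P' e unfolding root_path_def by blast+
  have "\<exists>u\<in>set P. u \<in> set P'"
    using root_in_root_path[OF P(1)] root_in_root_path[OF P'(1)] by blast
  then obtain A1 w A where S: "P = A1 @ w # A" "w \<in> set P'" "\<forall>u\<in>set A. u \<notin> set P'"
    using split_list_last_prop[of P "\<lambda>u. u \<in> set P'"] by blast
  obtain A1' A' where S': "P' = A1' @ w # A'"
    using S(2) by (meson split_list)
  have dA: "dipath E (w # A @ [v])"
    using Pv S(1) dipath_appendD(2)[of E A1 "w # A @ [v]"] by simp
  have dA': "dipath E (w # A' @ [v])"
    using P'v S' dipath_appendD(2)[of E A1' "w # A' @ [v]"] by simp
  have "set A \<inter> set A' = {}"
    using S(3) S' by auto
  moreover have "distinct (w # A @ [v])" "distinct (w # A' @ [v])"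
    using dA dA' by (simp_all only: dipath_def)
  ultimately have "distinct (w # A @ v # A')"
    by auto
  moreover have "A \<noteq> [] \<or> A' \<noteq> []"
  proof (rule ccontr)
    assume "\<not> (A \<noteq> [] \<or> A' \<noteq> [])"
    then have "x = w" "x' = w" using P(2) P'(2) S(1) S' by simp_all
    with \<open>x \<noteq> x'\<close> show False by simp
  qed
  ultimately have "undirected_cycle E (w # A @ v # rev A')"
    using dA dA' by (intro undirected_cycle_of_parallel_paths) (simp_all add: dipath_iff_successively)
  then show False using arborescence_no_undirected_cycle by blast
qed

lemma dipath_suffix_root_path:
  "dipath E vs \<Longrightarrow> root_path E r P \<Longrightarrow> last vs = last P \<Longrightarrow> suffix vs P"
proof (induction vs)
  case (Cons a ws)
  show ?case
  proof (cases "ws = []")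
    case True
    then show ?thesis using Cons.prems(2,3)
      by (metis dipath_def root_path_def append_butlast_last_id last.simps suffix_def)
  next
    case False
    have "dipath E ws" using Cons.prems(1) False dipath_appendD(2)[of E "[a]" ws] by simp
    then obtain ys where ys: "P = ys @ ws"
      using Cons.IH Cons.prems(2,3) False by (auto simp: suffix_def)
    have ea: "(a, hd ws) \<in> E"
      using Cons.prems(1) False by (auto simp: dipath_iff_successively neq_Nil_conv)
    have "ys \<noteq> []"
      using ys Cons.prems(2) ea no_arc_into_root by (auto simp: root_path_def)
    then have "(last ys, hd ws) \<in> E"
      using Cons.prems(2) ys False by (auto simp: root_path_def dipath_iff_successively successively_append_iff)
    then have "last ys = a" using in_arc_unique ea by blast
    then have "P = butlast ys @ a # ws"
      using ys \<open>ys \<noteq> []\<close> by (metis append_butlast_last_id append.assoc append_Cons append_Nil)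
    then show ?thesis by (auto simp: suffix_def)
  qed
qed (simp add: dipath_def)

lemma root_path_unique:
  assumes "root_path E r P" "root_path E r P'" "last P = last P'"
  shows "P = P'"
proof -
  obtain ys where ys: "P' = ys @ P"
    using dipath_suffix_root_path assms by (auto simp: root_path_def suffix_def)
  have "ys = []"
  proof (rule ccontr)
    assume "ys \<noteq> []"
    then have "(last ys, hd P) \<in> E"
      using assms(1,2) ys by (auto simp: root_path_def dipath_iff_successively successively_append_iff)
    then show False using no_arc_into_root assms(1) by (simp add: root_path_def)
  qed
  then show ?thesis using ys by simp
qed

lemma root_path_set_subset: "root_path E r P \<Longrightarrow> set P \<subseteq> V"
  using dipath_set_subset arborescence_arcs_subset arborescence_root_in
  by (auto simp: root_path_def)

lemma root_path_prefix:
  assumes P: "root_path E r P" and Q: "root_path E r Q" and "last P \<in> set Q"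
  shows "prefix P Q"
proof -
  obtain A B where AB: "Q = A @ last P # B"
    using assms(3) by (meson split_list)
  have "root_path E r (A @ [last P])"
    using Q AB dipath_appendD(1)[of E "A @ [last P]" B] P
    by (cases A) (auto simp: root_path_def dipath_def)
  then have "P = A @ [last P]"
    using root_path_unique[OF P] by simp
  then show ?thesis using AB by (metis prefix_def append.assoc append_Cons append_Nil)
qed

lemma root_segment_arcs_subset_iff:
  assumes P: "root_path E r P" and Q: "root_path E r Q"
    and s: "s + 2 \<le> length P" and t: "t + 2 \<le> length Q"
  shows "path_arcs (drop s P) \<subseteq> path_arcs (drop t Q) \<longleftrightarrow> prefix P Q \<and> t \<le> s"
proof
  assume sub: "path_arcs (drop s P) \<subseteq> path_arcs (drop t Q)"
  from subsetD[OF sub last_arc_in_path_arcs_drop[OF s]]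
  obtain j where "Suc j < length Q" "last P = Q ! Suc j"
    unfolding path_arcs_drop by blast
  then have "last P \<in> set Q" by simp
  then have pre: "prefix P Q" using root_path_prefix P Q by blast
  have "(P ! s, P ! Suc s) \<in> path_arcs (drop s P)"
    unfolding path_arcs_drop using s by auto
  from subsetD[OF sub this] obtain i where i: "t \<le> i" "i < length Q" "P ! s = Q ! i"
    unfolding path_arcs_drop by (meson Suc_lessD)
  have "Q ! s = P ! s" "s < length Q"
    using pre s prefix_length_le[OF pre] by (auto simp: prefix_def nth_append)
  then have "s = i"
    using Q i by (simp add: root_path_def dipath_def nth_eq_iff_index_eq)
  then show "prefix P Q \<and> t \<le> s" using pre i by blast
next
  assume "prefix P Q \<and> t \<le> s"
  then obtain R where R: "Q = P @ R" and ts: "t \<le> s" by (auto simp: prefix_def)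
  show "path_arcs (drop s P) \<subseteq> path_arcs (drop t Q)"
  proof (clarify)
    fix x y assume "(x, y) \<in> path_arcs (drop s P)"
    then obtain j where "s \<le> j" "Suc j < length P" "x = P ! j" "y = P ! Suc j"
      unfolding path_arcs_drop by blast
    then show "(x, y) \<in> path_arcs (drop t Q)"
      unfolding path_arcs_drop R using ts by (intro exI[of _ j]) (auto simp: nth_append)
  qed
qed

lemma nonempty_path_arcs_root_segment:
  assumes "p \<in> nonempty_path_arcsets E"
  shows "\<exists>P s. root_path E r P \<and> s + 2 \<le> length P \<and> p = path_arcs (drop s P)"
proof -
  obtain vs where vs: "dipath E vs" "2 \<le> length vs" "p = path_arcs vs"
    using assms by (auto simp: nonempty_path_arcsets_def)
  have "(vs ! (length vs - 2), last vs) \<in> E"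
    using last_arc_in_path_arcs_drop[of 0 vs] dipath_path_arcs_subset[OF vs(1)] vs(2) by auto
  then have "last vs \<in> V"
    using arborescence_arcs_subset by blast
  then obtain P where P: "root_path E r P" "last P = last vs"
    using root_path_exists by blast
  then obtain ys where "P = ys @ vs"
    using dipath_suffix_root_path[OF vs(1) P(1)] by (auto simp: suffix_def)
  then show ?thesis
    using P vs by (intro exI[of _ P] exI[of _ "length ys"]) auto
qed

lemma nonempty_path_arcsets_prefix_encoding:
  obtains \<rho> :: "('a \<times> 'a) set \<Rightarrow> int list" and s :: "('a \<times> 'a) set \<Rightarrow> nat"
  where "\<And>p q. p \<in> nonempty_path_arcsets E \<Longrightarrow> q \<in> nonempty_path_arcsets E \<Longrightarrow>
    p \<subseteq> q \<longleftrightarrow> prefix (\<rho> p) (\<rho> q) \<and> s q \<le> s p"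
proof -
  let ?X = "nonempty_path_arcsets E"
  have "\<forall>p\<in>?X. \<exists>P s. root_path E r P \<and> s + 2 \<le> length P \<and> p = path_arcs (drop s P)"
    by (intro ballI nonempty_path_arcs_root_segment)
  then obtain P s where seg: "\<And>p. p \<in> ?X \<Longrightarrow>
      root_path E r (P p) \<and> s p + 2 \<le> length (P p) \<and> p = path_arcs (drop (s p) (P p))"
    by metis
  obtain f :: "'a \<Rightarrow> nat" where f: "inj_on f V"
    using finite_imp_inj_to_nat_seg[OF arborescence_finite] by metis
  have "p \<subseteq> q \<longleftrightarrow> prefix (map (int \<circ> f) (P p)) (map (int \<circ> f) (P q)) \<and> s q \<le> s p"
    if "p \<in> ?X" "q \<in> ?X" for p q
  proof -
    have "p \<subseteq> q \<longleftrightarrow> prefix (P p) (P q) \<and> s q \<le> s p"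
      using root_segment_arcs_subset_iff[of "P p" "P q" "s p" "s q"]
        seg[OF that(1)] seg[OF that(2)] by auto
    moreover have "inj_on (int \<circ> f) (set (P p) \<union> set (P q))"
      using f root_path_set_subset seg that by (auto simp: inj_on_def)
    ultimately show ?thesis
      by (simp add: prefix_map_iff)
  qed
  then show ?thesis by (rule that)
qed

end

section \<open>A realizer of dimension three\<close>

lemma prefix_iff_lex_and_neg_lex:
  fixes xs ys :: "'c::linordered_ab_group_add list"
  shows "prefix xs ys \<longleftrightarrow> xs \<le> ys \<and> map uminus xs \<le> map uminus ys"
proof (induction xs arbitrary: ys)
  case (Cons a xs)
  show ?case
  proof (cases ys)
    case (Cons b ys')
    have "\<not> (a < b \<and> b < a)" using less_asym by blast
    then show ?thesis using Cons.IH[of ys'] by (auto simp: Cons)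
  qed simp
qed simp

lemma prefix_antitone_iff_lex_keys:
  fixes xs ys :: "'c::linordered_ab_group_add list" and s t :: nat
  shows "prefix xs ys \<and> t \<le> s \<longleftrightarrow>
    (xs, - int s) \<le> (ys, - int t) \<and> (map uminus xs, - int s) \<le> (map uminus ys, - int t) \<and>
    (- int s, xs) \<le> (- int t, ys)"
  by (cases "xs = ys") (auto simp: prefix_iff_lex_and_neg_lex)

definition key_order :: "'b set \<Rightarrow> ('b \<Rightarrow> 'c::ord) \<Rightarrow> ('b \<times> 'b) set" where
  "key_order X k = {(p, q). p \<in> X \<and> q \<in> X \<and> k p \<le> k q}"

lemma linear_order_on_key_order:
  fixes k :: "'b \<Rightarrow> 'c::linorder"
  assumes "inj_on k X"
  shows "linear_order_on X (key_order X k)"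
  using assms unfolding key_order_def linear_order_on_def partial_order_on_def preorder_on_def refl_on_def
    trans_def antisym_def total_on_def inj_on_def
  by (auto intro: order_trans simp: linorder_linear)

lemma realizer_prefix_antitone:
  fixes \<rho> :: "'b \<Rightarrow> 'c::linordered_ab_group_add list" and s :: "'b \<Rightarrow> nat"
  assumes inj: "inj_on (\<lambda>p. (\<rho> p, s p)) X"
    and R: "\<And>p q. p \<in> X \<Longrightarrow> q \<in> X \<Longrightarrow> (p, q) \<in> R \<longleftrightarrow> prefix (\<rho> p) (\<rho> q) \<and> s q \<le> s p"
  shows "\<exists>L. realizer X R 3 L"
proof -
  define L where "L i = (if i = 0 then key_order X (\<lambda>p. (\<rho> p, - int (s p)))
    else if i = 1 then key_order X (\<lambda>p. (map uminus (\<rho> p), - int (s p)))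
    else key_order X (\<lambda>p. (- int (s p), \<rho> p)))" for i :: nat
  have "linear_order_on X (L i)" for i
    using inj unfolding L_def
    by (auto intro!: linear_order_on_key_order simp: inj_on_def inj_map_eq_map inj_def)
  moreover have "(p, q) \<in> R \<longleftrightarrow> (\<forall>i<3. (p, q) \<in> L i)" if "p \<in> X" "q \<in> X" for p q
  proof -
    have "(\<forall>i<3. (p, q) \<in> L i) \<longleftrightarrow> (p, q) \<in> L 0 \<and> (p, q) \<in> L 1 \<and> (p, q) \<in> L 2"
      by (auto simp: eval_nat_numeral less_Suc_eq)
    then show ?thesis
      using that by (simp add: R L_def key_order_def prefix_antitone_iff_lex_keys)
  qed
  ultimately show ?thesis
    unfolding realizer_def by blast
qed

lemma order_dimension_le:
  "realizer X R k L \<Longrightarrow> order_dimension X R \<le> k"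
  unfolding order_dimension_def by (rule Least_le) blast

theorem proposition1:
  fixes V :: "'a set" and E :: "('a \<times> 'a) set" and r :: 'a
  assumes "arborescence V E r"
  shows "order_dimension (nonempty_path_arcsets E)
           (inclusion_order (nonempty_path_arcsets E)) \<le> 3"
proof -
  define X where "X = nonempty_path_arcsets E"
  obtain \<rho> :: "('a \<times> 'a) set \<Rightarrow> int list" and s :: "('a \<times> 'a) set \<Rightarrow> nat"
    where incl: "\<And>p q. p \<in> X \<Longrightarrow> q \<in> X \<Longrightarrow> p \<subseteq> q \<longleftrightarrow> prefix (\<rho> p) (\<rho> q) \<and> s q \<le> s p"
    using nonempty_path_arcsets_prefix_encoding[OF assms] unfolding X_def by blast
  have "inj_on (\<lambda>p. (\<rho> p, s p)) X"
  proof (rule inj_onI)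
    fix p q assume "p \<in> X" "q \<in> X" "(\<rho> p, s p) = (\<rho> q, s q)"
    then have "p \<subseteq> q" "q \<subseteq> p" using incl by simp_all
    then show "p = q" by (rule subset_antisym)
  qed
  then have "\<exists>L. realizer X (inclusion_order X) 3 L"
    by (rule realizer_prefix_antitone) (simp add: inclusion_order_def incl)
  then obtain L where "realizer X (inclusion_order X) 3 L" ..
  then show ?thesis
    unfolding X_def by (rule order_dimension_le)
qed

end
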